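(* In the setting described in the context, let $C_\phi$ be a Lipschitz constant of $\phi$. For every $m$ and every $x,x'$ lying in the same green cylinder, $$e^{-C_\phi/2}\le \frac{H_m(x)}{H_m(x')}\le e^{C_\phi/2}.$$
   Context: Setting: $A$ ($K\times K$) and $D$ ($N\times N$) are irreducible $\{0,1\}$-matrices; $M_0$ is a $(K+N)\times(K+N)$ $\{0,1\}$-matrix with diagonal blocks $A$, $D$ and some power with all entries positive; the alphabet is $\{\alpha_1,\dots,\alpha_K,\delta_1,\dots,\delta_N\}$; $\Sigma_0$ is the one-sided SFT for $M_0$ with shift $\sigma$ and metric $d(\omega,\omega')=2^{-\min\{k:\omega_k\ne\omega'_k\}}$; $\Sigma_A,\Sigma_D$ are the points with only $\alpha$-digits, resp. only $\delta$-digits; $\phi:\Sigma_0\to\mathbb R$ is Lipschitz with $|\phi(x)-\phi(y)|\le C_\phi d(x,y)$ and has the same pressure $P$ on $\Sigma_A$ and $\Sigma_D$. $\alpha_j\delta_l$ denotes any allowed word $\alpha$-digit then $\delta$-digit, $\delta_i\alpha_k$ any allowed word $\delta$-digit then $\alpha$-digit; $\delta^n,\alpha^n$ denote words of $n$ $\delta$-, resp. $\alpha$-digits. $A'\le A$, $D'\le D$ entrywise are $\{0,1\}$-matrices with $A'\ne A$, $D'\ne D$, rows of $A'$ indexed by $\alpha$-digits that can follow a $\delta$-digit nonzero, rows of $D'$ indexed by $\delta$-digits that can follow an $\alpha$-digit nonzero; $(n_m),(n'_m)$ increasing integer sequences tending to $\infty$. $\Sigma_m\subset\Sigma_0$ is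 obtained by additionally forbidding: $\alpha_j\delta_l\delta^n\delta_i\alpha_k$ with $n<n'_m-2$, or with $n\ge n'_m-2$ and $\delta_l$ followed by the first $n'_m-2$ letters of $\delta^n$ not $D'$-eligible; $\delta_i\alpha_k\alpha^n\alpha_j\delta_l$ with $n<n_m-2$, or with $n\ge n_m-2$ and $\alpha_k$ followed by the first $n_m-2$ letters of $\alpha^n$ not $A'$-eligible (eligible = all consecutive transitions allowed by the matrix). $P_m$ is the pressure of $\phi$ on $\Sigma_m$. Induced scheme: green cylinders are the 2-cylinders $[\alpha_j\delta_l]$ and $[\delta_i\alpha_k]$, and $G$ is their union. For $x\in[\delta_i\alpha_k]$ its $g_m$-preimages are the points $y=\alpha_j\delta_l w x$ (with $w$ a $\delta$-word) such that $\alpha_j\delta_l w\delta_i\alpha_k$ is allowed in $\Sigma_m$, with return time $r_m(y)=|w|+2$; symmetrically for $x\in[\alpha_j\delta_l]$. The induced transfer operator is $\mathcal L_{G,m}f(x)=\sum_{y:\,g_m(y)=x}e^{S_{r_m(y)}\phi(y)-r_m(y)P_m}f(y)$, with $S_n\phi=\sum_{i<n}\phi\circ\sigma^i$. It has spectral radius 1; $\nu_m$ is the probability with $\int\mathcal L_{G,m}f\,d\nu_m=\int f\,d\nu_m$, and $H_m=\lim_{n}\frac1n\sum_{k=0}^{n-1}\mathcal L_{G,m}^k(\mathbf 1_G)$ (uniform limit) is the positive eigenfunction $\mathcal L_{G,m}H_m=H_m$ with $\int H_m\,d\nu_m=1$. *)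

theory Defs
  imports "HOL-Analysis.Analysis"
begin

text \<open>The alpha-digits alpha_1..alpha_K are
  0..K-1 and the delta-digits delta_1..delta_N are K..K+N-1.  Matrices with entries in
  {0,1} are represented as boolean relations on indices (True = 1).  A is indexed by
  alpha-digits 0..K-1; D (and D') by delta-indices 0..N-1 (delta-digit K+l has index l).\<close>

type_synonym seq = "nat \<Rightarrow> nat"

text \<open>walk d M n i j: the (i,j) entry of M^n is positive (M a d x d 0-1 matrix).\<close>
fun walk :: "nat \<Rightarrow> (nat \<Rightarrow> nat \<Rightarrow> bool) \<Rightarrow> nat \<Rightarrow> nat \<Rightarrow> nat \<Rightarrow> bool" where
  "walk d M 0 i j = (i = j)"
| "walk d M (Suc n) i j = (\<exists>k<d. M i k \<and> walk d M n k j)"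

definition irreducible_mat :: "nat \<Rightarrow> (nat \<Rightarrow> nat \<Rightarrow> bool) \<Rightarrow> bool" where
  "irreducible_mat d M \<longleftrightarrow> (\<forall>i<d. \<forall>j<d. \<exists>n>0. walk d M n i j)"

definition some_power_positive :: "nat \<Rightarrow> (nat \<Rightarrow> nat \<Rightarrow> bool) \<Rightarrow> bool" where
  "some_power_positive d M \<longleftrightarrow> (\<exists>n. \<forall>i<d. \<forall>j<d. walk d M n i j)"

definition SFT :: "nat \<Rightarrow> (nat \<Rightarrow> nat \<Rightarrow> bool) \<Rightarrow> seq set" where
  "SFT d M = {\<omega>. \<forall>k. \<omega> k < d \<and> M (\<omega> k) (\<omega> (Suc k))}"

definition dist_sym :: "seq \<Rightarrow> seq \<Rightarrow> real" where
  "dist_sym x y = (if x = y then 0 else (1/2) ^ (LEAST k. x k \<noteq> y k))"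

definition shift_pow :: "nat \<Rightarrow> seq \<Rightarrow> seq" where
  "shift_pow i x = (\<lambda>k. x (k + i))"

definition birkhoff :: "(seq \<Rightarrow> real) \<Rightarrow> nat \<Rightarrow> seq \<Rightarrow> real" where
  "birkhoff \<phi> n x = (\<Sum>i<n. \<phi> (shift_pow i x))"

definition lang :: "seq set \<Rightarrow> nat \<Rightarrow> nat list set" where
  "lang X n = (\<lambda>x. map x [0..<n]) ` X"

definition pressure :: "seq set \<Rightarrow> (seq \<Rightarrow> real) \<Rightarrow> real" where
  "pressure X \<phi> = lim (\<lambda>n. ln (\<Sum>w\<in>lang X n.
       exp (SUP x\<in>{x\<in>X. map x [0..<n] = w}. birkhoff \<phi> n x)) / real n)"

definition Sigma_A :: "nat \<Rightarrow> nat \<Rightarrow> (nat \<Rightarrow> nat \<Rightarrow> bool) \<Rightarrow> seq set" where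
  "Sigma_A K N M0 = {\<omega>\<in>SFT (K+N) M0. \<forall>k. \<omega> k < K}"

definition Sigma_D :: "nat \<Rightarrow> nat \<Rightarrow> (nat \<Rightarrow> nat \<Rightarrow> bool) \<Rightarrow> seq set" where
  "Sigma_D K N M0 = {\<omega>\<in>SFT (K+N) M0. \<forall>k. K \<le> \<omega> k}"

text \<open>delta_forb K D' L f p n: at position p of f starts a word
  alpha_j delta_l delta^n delta_i alpha_k (length n+4) which is forbidden in Sigma_m,
  where L = n'_m.\<close>
definition delta_forb :: "nat \<Rightarrow> (nat \<Rightarrow> nat \<Rightarrow> bool) \<Rightarrow> nat \<Rightarrow> seq \<Rightarrow> nat \<Rightarrow> nat \<Rightarrow> bool" where
  "delta_forb K D' L f p n \<longleftrightarrow>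
     f p < K \<and> (\<forall>t. p < t \<and> t \<le> p + n + 2 \<longrightarrow> K \<le> f t) \<and> f (p + n + 3) < K \<and>
     (n < L - 2 \<or>
      (L - 2 \<le> n \<and> \<not> (\<forall>t. p < t \<and> t < p + 1 + (L - 2) \<longrightarrow> D' (f t - K) (f (Suc t) - K))))"

text \<open>alpha_forb K A' L f p n: at position p of f starts a word
  delta_i alpha_k alpha^n alpha_j delta_l which is forbidden in Sigma_m, where L = n_m.\<close>
definition alpha_forb :: "nat \<Rightarrow> (nat \<Rightarrow> nat \<Rightarrow> bool) \<Rightarrow> nat \<Rightarrow> seq \<Rightarrow> nat \<Rightarrow> nat \<Rightarrow> bool" where
  "alpha_forb K A' L f p n \<longleftrightarrow>
     K \<le> f p \<and> (\<forall>t. p < t \<and> t \<le> p + n + 2 \<longrightarrow> f t < K) \<and> K \<le> f (p + n + 3) \<and>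
     (n < L - 2 \<or>
      (L - 2 \<le> n \<and> \<not> (\<forall>t. p < t \<and> t < p + 1 + (L - 2) \<longrightarrow> A' (f t) (f (Suc t)))))"

text \<open>Sigma_m, with La = n_m and Ld = n'_m.\<close>
definition Sigma_m :: "nat \<Rightarrow> nat \<Rightarrow> (nat \<Rightarrow> nat \<Rightarrow> bool) \<Rightarrow> (nat \<Rightarrow> nat \<Rightarrow> bool) \<Rightarrow>
    (nat \<Rightarrow> nat \<Rightarrow> bool) \<Rightarrow> nat \<Rightarrow> nat \<Rightarrow> seq set" where
  "Sigma_m K N M0 A' D' La Ld =
     {\<omega>\<in>SFT (K+N) M0. \<not> (\<exists>p n. delta_forb K D' Ld \<omega> p n) \<and> \<not> (\<exists>p n. alpha_forb K A' La \<omega> p n)}"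

definition word_allowed :: "nat \<Rightarrow> nat \<Rightarrow> (nat \<Rightarrow> nat \<Rightarrow> bool) \<Rightarrow> (nat \<Rightarrow> nat \<Rightarrow> bool) \<Rightarrow>
    (nat \<Rightarrow> nat \<Rightarrow> bool) \<Rightarrow> nat \<Rightarrow> nat \<Rightarrow> nat list \<Rightarrow> bool" where
  "word_allowed K N M0 A' D' La Ld w \<longleftrightarrow>
     (\<forall>k<length w. w ! k < K + N) \<and> (\<forall>k. Suc k < length w \<longrightarrow> M0 (w ! k) (w ! Suc k)) \<and>
     \<not> (\<exists>p n. p + n + 3 < length w \<and> delta_forb K D' Ld (\<lambda>k. w ! k) p n) \<and>
     \<not> (\<exists>p n. p + n + 3 < length w \<and> alpha_forb K A' La (\<lambda>k. w ! k) p n)"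

definition pcat :: "nat list \<Rightarrow> seq \<Rightarrow> seq" where
  "pcat u x = (\<lambda>k. if k < length u then u ! k else x (k - length u))"

definition green :: "nat \<Rightarrow> nat \<Rightarrow> (nat \<Rightarrow> nat \<Rightarrow> bool) \<Rightarrow> seq set" where
  "green K N M0 = {x\<in>SFT (K+N) M0. (x 0 < K \<and> K \<le> x 1) \<or> (K \<le> x 0 \<and> x 1 < K)}"

text \<open>Prefixes u such that y = u x is a g_m-preimage of a point x whose first two
  symbols are a b; the return time is r_m(y) = length u.\<close>
definition pre_prefixes :: "nat \<Rightarrow> nat \<Rightarrow> (nat \<Rightarrow> nat \<Rightarrow> bool) \<Rightarrow> (nat \<Rightarrow> nat \<Rightarrow> bool) \<Rightarrow>
    (nat \<Rightarrow> nat \<Rightarrow> bool) \<Rightarrow> nat \<Rightarrow> nat \<Rightarrow> nat \<Rightarrow> nat \<Rightarrow> nat list set" where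
  "pre_prefixes K N M0 A' D' La Ld a b =
     {u. 2 \<le> length u \<and> word_allowed K N M0 A' D' La Ld (u @ [a, b]) \<and>
         ((K \<le> a \<and> b < K \<and> u ! 0 < K \<and> (\<forall>i. 1 \<le> i \<and> i < length u \<longrightarrow> K \<le> u ! i)) \<or>
          (a < K \<and> K \<le> b \<and> K \<le> u ! 0 \<and> (\<forall>i. 1 \<le> i \<and> i < length u \<longrightarrow> u ! i < K)))}"

definition Lop :: "nat \<Rightarrow> nat \<Rightarrow> (nat \<Rightarrow> nat \<Rightarrow> bool) \<Rightarrow> (nat \<Rightarrow> nat \<Rightarrow> bool) \<Rightarrow>
    (nat \<Rightarrow> nat \<Rightarrow> bool) \<Rightarrow> nat \<Rightarrow> nat \<Rightarrow> (seq \<Rightarrow> real) \<Rightarrow> real \<Rightarrow> (seq \<Rightarrow> real) \<Rightarrow> seq \<Rightarrow> real" where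
  "Lop K N M0 A' D' La Ld \<phi> Pm f x =
     infsum (\<lambda>u. exp (birkhoff \<phi> (length u) (pcat u x) - real (length u) * Pm) * f (pcat u x))
       (pre_prefixes K N M0 A' D' La Ld (x 0) (x 1))"

definition cesaro :: "nat \<Rightarrow> nat \<Rightarrow> (nat \<Rightarrow> nat \<Rightarrow> bool) \<Rightarrow> (nat \<Rightarrow> nat \<Rightarrow> bool) \<Rightarrow>
    (nat \<Rightarrow> nat \<Rightarrow> bool) \<Rightarrow> nat \<Rightarrow> nat \<Rightarrow> (seq \<Rightarrow> real) \<Rightarrow> nat \<Rightarrow> seq \<Rightarrow> real" where
  "cesaro K N M0 A' D' La Ld \<phi> n x =
     (\<Sum>k<n. ((Lop K N M0 A' D' La Ld \<phi> (pressure (Sigma_m K N M0 A' D' La Ld) \<phi>) ^^ k)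
               (indicator (green K N M0))) x) / real n"

definition Hm :: "nat \<Rightarrow> nat \<Rightarrow> (nat \<Rightarrow> nat \<Rightarrow> bool) \<Rightarrow> (nat \<Rightarrow> nat \<Rightarrow> bool) \<Rightarrow>
    (nat \<Rightarrow> nat \<Rightarrow> bool) \<Rightarrow> nat \<Rightarrow> nat \<Rightarrow> (seq \<Rightarrow> real) \<Rightarrow> seq \<Rightarrow> real" where
  "Hm K N M0 A' D' La Ld \<phi> x = lim (\<lambda>n. cesaro K N M0 A' D' La Ld \<phi> n x)"

end

theory Submission
  imports Defs
begin

text \<open>Call a nonnegative function f on the SFT C-regular if f y \<le> exp (2 C / 2^n) f z
  whenever y and z agree on their first n \<ge> 2 symbols. The indicator of G is C-regular
  because G is a union of 2-cylinders. The summands of the induced transfer operator at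
  y and at z are evaluated at u y and u z for the same prefix u of length r \<ge> 2; these
  points agree on r + n symbols, so their Birkhoff sums differ by at most
  C (2^-(n+1) + ... + 2^-(n+r)) \<le> C / 2^n, and the values of f by a factor at most
  exp (2 C / 2^(n+r)) \<le> exp (C / 2^n). Hence C-regularity passes to all iterates, to
  their Cesaro averages and to the limit H_m; taking n = 2 gives the factor exp (C / 2).\<close>

lemma dist_sym_le_half_power:
  assumes "\<forall>i<k. y i = z i"
  shows "dist_sym y z \<le> (1/2) ^ k"
proof (cases "y = z")
  case True
  then show ?thesis by (simp add: dist_sym_def)
next
  case False
  then obtain j where "y j \<noteq> z j" by auto
  then have "y (LEAST j. y j \<noteq> z j) \<noteq> z (LEAST j. y j \<noteq> z j)" by (rule LeastI)
  then have "k \<le> (LEAST j. y j \<noteq> z j)" using assms by (meson not_less)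
  then have "(1/2::real) ^ (LEAST j. y j \<noteq> z j) \<le> (1/2) ^ k" by (rule power_decreasing) auto
  then show ?thesis using False by (simp add: dist_sym_def)
qed

lemma lipschitz_const_nonneg:
  assumes lip: "\<forall>y\<in>SFT d M. \<forall>z\<in>SFT d M. \<bar>\<phi> y - \<phi> z\<bar> \<le> C * dist_sym y z"
    and y: "y \<in> SFT d M" and z: "z \<in> SFT d M" and "y \<noteq> z"
  shows "0 \<le> C"
proof -
  have "0 < dist_sym y z" using \<open>y \<noteq> z\<close> by (simp add: dist_sym_def)
  moreover have "0 \<le> C * dist_sym y z" using lip y z by (meson abs_ge_zero order_trans)
  ultimately show ?thesis by (simp add: zero_le_mult_iff)
qed

lemma sum_half_powers_le: "(\<Sum>i<L. (1/2::real) ^ (L + n - i)) \<le> (1/2) ^ n"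
proof (induction L arbitrary: n)
  case 0
  then show ?case by simp
next
  case (Suc L)
  have "(\<Sum>i<Suc L. (1/2::real) ^ (Suc L + n - i)) = (\<Sum>i<L. (1/2::real) ^ (L + Suc n - i)) + (1/2) ^ Suc n"
    by (simp add: Suc_diff_le)
  also have "\<dots> \<le> (1/2) ^ Suc n + (1/2) ^ Suc n" using Suc.IH[of "Suc n"] by simp
  finally show ?case by simp
qed

lemma shift_pow_SFT: "y \<in> SFT d M \<Longrightarrow> shift_pow i y \<in> SFT d M"
  by (simp add: SFT_def shift_pow_def)

lemma birkhoff_le_of_agree:
  assumes lip: "\<forall>y\<in>SFT d M. \<forall>z\<in>SFT d M. \<bar>\<phi> y - \<phi> z\<bar> \<le> C * dist_sym y z"
    and C: "0 \<le> C" and a: "a \<in> SFT d M" and b: "b \<in> SFT d M"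
    and agree: "\<forall>i<L + n. a i = b i"
  shows "birkhoff \<phi> L a \<le> birkhoff \<phi> L b + C * (1/2) ^ n"
proof -
  have term_le: "\<phi> (shift_pow i a) \<le> \<phi> (shift_pow i b) + C * (1/2) ^ (L + n - i)" if "i < L" for i
  proof -
    have "\<forall>j<L + n - i. shift_pow i a j = shift_pow i b j"
      using agree by (auto simp: shift_pow_def)
    then have "dist_sym (shift_pow i a) (shift_pow i b) \<le> (1/2) ^ (L + n - i)"
      by (rule dist_sym_le_half_power)
    moreover have "\<bar>\<phi> (shift_pow i a) - \<phi> (shift_pow i b)\<bar> \<le> C * dist_sym (shift_pow i a) (shift_pow i b)"
      using lip shift_pow_SFT[OF a] shift_pow_SFT[OF b] by blast
    ultimately show ?thesis using mult_left_mono[OF _ C] by fastforce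
  qed
  have "birkhoff \<phi> L a \<le> (\<Sum>i<L. \<phi> (shift_pow i b) + C * (1/2) ^ (L + n - i))"
    unfolding birkhoff_def by (intro sum_mono) (simp add: term_le)
  also have "\<dots> = birkhoff \<phi> L b + C * (\<Sum>i<L. (1/2) ^ (L + n - i))"
    by (simp add: birkhoff_def sum.distrib sum_distrib_left)
  also have "\<dots> \<le> birkhoff \<phi> L b + C * (1/2) ^ n"
    using sum_half_powers_le C by (simp add: mult_left_mono)
  finally show ?thesis .
qed

lemma pcat_nth_append:
  assumes "k < length u + 2" "y 0 = a" "y 1 = b"
  shows "pcat u y k = (u @ [a, b]) ! k"
proof (cases "k < length u")
  case True
  then show ?thesis by (simp add: pcat_def nth_append)
next
  case False
  then have "k = length u \<or> k = Suc (length u)" using assms(1) by auto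
  then show ?thesis using assms by (auto simp: pcat_def nth_append)
qed

lemma pcat_SFT:
  assumes y: "y \<in> SFT (K + N) M0" and w: "word_allowed K N M0 A' D' La Ld (u @ [y 0, y 1])"
  shows "pcat u y \<in> SFT (K + N) M0"
  unfolding SFT_def
proof (intro CollectI allI conjI)
  fix k
  let ?w = "u @ [y 0, y 1]"
  have w_syms: "\<forall>k<length ?w. ?w ! k < K + N"
    and w_trans: "\<forall>k. Suc k < length ?w \<longrightarrow> M0 (?w ! k) (?w ! Suc k)"
    using w unfolding word_allowed_def by blast+
  show "pcat u y k < K + N"
  proof (cases "k < length u + 2")
    case True
    then show ?thesis using w_syms pcat_nth_append[OF True] by simp
  next
    case False
    then show ?thesis using y by (simp add: pcat_def SFT_def)
  qed
  show "M0 (pcat u y k) (pcat u y (Suc k))"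
  proof (cases "Suc k < length u + 2")
    case True
    then show ?thesis using w_trans pcat_nth_append[OF True] pcat_nth_append[of k u] by simp
  next
    case False
    then have "pcat u y k = y (k - length u)" "pcat u y (Suc k) = y (Suc (k - length u))"
      by (auto simp: pcat_def Suc_diff_le)
    then show ?thesis using y by (simp add: SFT_def)
  qed
qed

lemma infsum_le_cmult_of_termwise:
  fixes f g :: "'a \<Rightarrow> real"
  assumes nonneg: "\<And>u. 0 \<le> f u" "\<And>u. 0 \<le> g u" and c: "0 \<le> c"
    and f_le: "\<And>u. u \<in> P \<Longrightarrow> f u \<le> c * g u"
    and g_le: "\<And>u. u \<in> P \<Longrightarrow> g u \<le> c * f u"
  shows "infsum f P \<le> c * infsum g P"
proof (cases "f summable_on P")
  case False
  then have "infsum f P = 0" by (rule infsum_not_exists)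
  then show ?thesis using nonneg c by (simp add: infsum_nonneg)
next
  case True
  have "g summable_on P"
    by (rule summable_on_comparison_test[OF summable_on_cmult_right[OF True]]) (use g_le nonneg in auto)
  then have "infsum f P \<le> infsum (\<lambda>u. c * g u) P"
    by (intro infsum_mono[OF True summable_on_cmult_right] f_le)
  also have "\<dots> = c * infsum g P" by (rule infsum_cmult_right')
  finally show ?thesis .
qed

definition regular_on_SFT :: "nat \<Rightarrow> (nat \<Rightarrow> nat \<Rightarrow> bool) \<Rightarrow> real \<Rightarrow> (seq \<Rightarrow> real) \<Rightarrow> bool" where
  "regular_on_SFT d M C f \<longleftrightarrow> (\<forall>y. 0 \<le> f y) \<and>
     (\<forall>n y z. 2 \<le> n \<longrightarrow> y \<in> SFT d M \<longrightarrow> z \<in> SFT d M \<longrightarrow> (\<forall>i<n. y i = z i) \<longrightarrow>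
        f y \<le> exp (2 * C * (1/2) ^ n) * f z)"

lemma regular_on_SFT_indicator_green:
  assumes "0 \<le> C"
  shows "regular_on_SFT (K + N) M0 C (indicator (green K N M0))"
  unfolding regular_on_SFT_def
proof (intro conjI allI impI)
  fix n y z
  assume "2 \<le> n" "y \<in> SFT (K + N) M0" "z \<in> SFT (K + N) M0" "\<forall>i<n. y i = z i"
  then have "indicator (green K N M0) y = (indicator (green K N M0) z :: real)"
    by (simp add: green_def indicator_def)
  moreover have "(1::real) \<le> exp (2 * C * (1/2) ^ n)" using assms by simp
  ultimately show "indicator (green K N M0) y \<le> exp (2 * C * (1/2) ^ n) * (indicator (green K N M0) z :: real)"
    by (simp add: indicator_def)
qed (simp add: indicator_def)

lemma Lop_summand_le:
  assumes lip: "\<forall>y\<in>SFT (K + N) M0. \<forall>z\<in>SFT (K + N) M0. \<bar>\<phi> y - \<phi> z\<bar> \<le> C * dist_sym y z"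
    and C: "0 \<le> C" and f: "regular_on_SFT (K + N) M0 C f"
    and y: "y \<in> SFT (K + N) M0" and z: "z \<in> SFT (K + N) M0"
    and n: "2 \<le> n" and agree: "\<forall>i<n. y i = z i"
    and u: "u \<in> pre_prefixes K N M0 A' D' La Ld (y 0) (y 1)"
  shows "exp (birkhoff \<phi> (length u) (pcat u y) - real (length u) * Pm) * f (pcat u y)
     \<le> exp (2 * C * (1/2) ^ n) * (exp (birkhoff \<phi> (length u) (pcat u z) - real (length u) * Pm) * f (pcat u z))"
proof -
  define L where "L = length u"
  have L: "2 \<le> L" using u by (simp add: pre_prefixes_def L_def)
  have w: "word_allowed K N M0 A' D' La Ld (u @ [y 0, y 1])" using u by (simp add: pre_prefixes_def)
  have "z 0 = y 0" "z 1 = y 1" using agree n by auto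
  then have uy: "pcat u y \<in> SFT (K + N) M0" and uz: "pcat u z \<in> SFT (K + N) M0"
    using pcat_SFT[OF y w] pcat_SFT[OF z, of A' D' La Ld u] w by simp_all
  have agree_u: "\<forall>i<L + n. pcat u y i = pcat u z i" using agree by (auto simp: pcat_def L_def)
  let ?\<epsilon> = "C * (1/2) ^ n"
  have birkhoff_le: "exp (birkhoff \<phi> L (pcat u y) - real L * Pm) \<le> exp ?\<epsilon> * exp (birkhoff \<phi> L (pcat u z) - real L * Pm)"
    using birkhoff_le_of_agree[OF lip C uy uz agree_u] by (simp flip: exp_add)
  have "(1/2::real) ^ (L + n) \<le> (1/4) * (1/2) ^ n"
    using mult_right_mono[OF power_decreasing[OF L, of "1/2::real"], of "(1/2) ^ n"]
    by (simp add: power_add power2_eq_square)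
  then have "C * (1/2::real) ^ (L + n) \<le> C * ((1/4) * (1/2) ^ n)" using C by (rule mult_left_mono)
  moreover have "0 \<le> C * (1/2::real) ^ n" using C by simp
  ultimately have "2 * C * (1/2) ^ (L + n) \<le> ?\<epsilon>" by (simp add: mult.assoc)
  then have "exp (2 * C * (1/2) ^ (L + n)) \<le> exp ?\<epsilon>" by simp
  moreover have "f (pcat u y) \<le> exp (2 * C * (1/2) ^ (L + n)) * f (pcat u z)"
    using f uy uz agree_u n unfolding regular_on_SFT_def by auto
  moreover have f_nonneg: "0 \<le> f (pcat u y)" "0 \<le> f (pcat u z)"
    using f by (auto simp: regular_on_SFT_def)
  ultimately have f_le: "f (pcat u y) \<le> exp ?\<epsilon> * f (pcat u z)"
    by (meson mult_right_mono order_trans)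
  have "exp (birkhoff \<phi> L (pcat u y) - real L * Pm) * f (pcat u y)
      \<le> (exp ?\<epsilon> * exp (birkhoff \<phi> L (pcat u z) - real L * Pm)) * (exp ?\<epsilon> * f (pcat u z))"
    by (rule mult_mono[OF birkhoff_le f_le]) (use f_nonneg in auto)
  also have "\<dots> = exp (2 * ?\<epsilon>) * (exp (birkhoff \<phi> L (pcat u z) - real L * Pm) * f (pcat u z))"
    by (simp add: mult_exp_exp algebra_simps)
  finally show ?thesis by (simp add: L_def mult.assoc)
qed

lemma regular_on_SFT_Lop:
  assumes lip: "\<forall>y\<in>SFT (K + N) M0. \<forall>z\<in>SFT (K + N) M0. \<bar>\<phi> y - \<phi> z\<bar> \<le> C * dist_sym y z"
    and C: "0 \<le> C" and f: "regular_on_SFT (K + N) M0 C f"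
  shows "regular_on_SFT (K + N) M0 C (Lop K N M0 A' D' La Ld \<phi> Pm f)"
  unfolding regular_on_SFT_def
proof (intro conjI allI impI)
  fix y
  show "0 \<le> Lop K N M0 A' D' La Ld \<phi> Pm f y"
    unfolding Lop_def using f by (intro infsum_nonneg) (auto simp: regular_on_SFT_def)
next
  fix n y z
  assume n: "2 \<le> n" and y: "y \<in> SFT (K + N) M0" and z: "z \<in> SFT (K + N) M0"
    and agree: "\<forall>i<n. y i = z i"
  then have same: "z 0 = y 0" "z 1 = y 1" by auto
  define summand where "summand x u = exp (birkhoff \<phi> (length u) (pcat u x) - real (length u) * Pm) * f (pcat u x)"
    for x u
  have "infsum (summand y) (pre_prefixes K N M0 A' D' La Ld (y 0) (y 1))
      \<le> exp (2 * C * (1/2) ^ n) * infsum (summand z) (pre_prefixes K N M0 A' D' La Ld (y 0) (y 1))"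
  proof (rule infsum_le_cmult_of_termwise)
    show "0 \<le> summand y u" "0 \<le> summand z u" for u
      using f by (auto simp: summand_def regular_on_SFT_def)
    show "summand y u \<le> exp (2 * C * (1/2) ^ n) * summand z u"
      if "u \<in> pre_prefixes K N M0 A' D' La Ld (y 0) (y 1)" for u
      using Lop_summand_le[OF lip C f y z n agree that] by (simp add: summand_def)
    show "summand z u \<le> exp (2 * C * (1/2) ^ n) * summand y u"
      if "u \<in> pre_prefixes K N M0 A' D' La Ld (y 0) (y 1)" for u
      using Lop_summand_le[OF lip C f z y n, where Pm = Pm] agree that same by (simp add: summand_def)
  qed simp
  then show "Lop K N M0 A' D' La Ld \<phi> Pm f y \<le> exp (2 * C * (1/2) ^ n) * Lop K N M0 A' D' La Ld \<phi> Pm f z"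
    unfolding Lop_def same by (simp add: summand_def[abs_def])
qed

lemma regular_on_SFT_cesaro:
  assumes lip: "\<forall>y\<in>SFT (K + N) M0. \<forall>z\<in>SFT (K + N) M0. \<bar>\<phi> y - \<phi> z\<bar> \<le> C * dist_sym y z"
    and C: "0 \<le> C"
  shows "regular_on_SFT (K + N) M0 C (cesaro K N M0 A' D' La Ld \<phi> n)"
proof -
  let ?f = "\<lambda>k. (Lop K N M0 A' D' La Ld \<phi> (pressure (Sigma_m K N M0 A' D' La Ld) \<phi>) ^^ k)
                   (indicator (green K N M0))"
  have iterates: "regular_on_SFT (K + N) M0 C (?f k)" for k
    by (induction k) (simp_all add: regular_on_SFT_indicator_green[OF C] regular_on_SFT_Lop[OF lip C])
  show ?thesis
    unfolding regular_on_SFT_def cesaro_def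
  proof (intro conjI allI impI)
    fix y
    show "0 \<le> (\<Sum>k<n. ?f k y) / real n"
      using iterates by (simp add: regular_on_SFT_def sum_nonneg)
  next
    fix m y z
    assume "2 \<le> m" "y \<in> SFT (K + N) M0" "z \<in> SFT (K + N) M0" "\<forall>i<m. y i = z i"
    then have "(\<Sum>k<n. ?f k y) \<le> (\<Sum>k<n. exp (2 * C * (1/2) ^ m) * ?f k z)"
      using iterates by (intro sum_mono) (simp add: regular_on_SFT_def)
    then show "(\<Sum>k<n. ?f k y) / real n \<le> exp (2 * C * (1/2) ^ m) * ((\<Sum>k<n. ?f k z) / real n)"
      by (simp add: divide_right_mono flip: sum_distrib_left)
  qed
qed

lemma Hm_eq_uniform_limit:
  assumes "uniform_limit (green K N M0) (\<lambda>n. cesaro K N M0 A' D' La Ld \<phi> n) h sequentially"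
    and "x \<in> green K N M0"
  shows "Hm K N M0 A' D' La Ld \<phi> x = h x"
  unfolding Hm_def using tendsto_uniform_limitI[OF assms] by (rule limI)

lemma Hm_le_of_same_cylinder:
  assumes lip: "\<forall>y\<in>SFT (K + N) M0. \<forall>z\<in>SFT (K + N) M0. \<bar>\<phi> y - \<phi> z\<bar> \<le> C * dist_sym y z"
    and C: "0 \<le> C"
    and lim: "uniform_limit (green K N M0) (\<lambda>n. cesaro K N M0 A' D' La Ld \<phi> n) h sequentially"
    and x: "x \<in> green K N M0" and x': "x' \<in> green K N M0" and same: "x 0 = x' 0" "x 1 = x' 1"
  shows "Hm K N M0 A' D' La Ld \<phi> x \<le> exp (C / 2) * Hm K N M0 A' D' La Ld \<phi> x'"
proof -
  have "\<forall>i<2. x i = x' i" using same by (auto simp: less_2_cases_iff)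
  moreover have "x \<in> SFT (K + N) M0" "x' \<in> SFT (K + N) M0" using x x' by (simp_all add: green_def)
  ultimately have "cesaro K N M0 A' D' La Ld \<phi> n x \<le> exp (2 * C * (1/2) ^ 2) * cesaro K N M0 A' D' La Ld \<phi> n x'"
    for n
    using regular_on_SFT_cesaro[OF lip C, of A' D' La Ld n] unfolding regular_on_SFT_def by blast
  moreover have "2 * C * (1/2) ^ 2 = C / 2" by (simp add: power2_eq_square)
  ultimately have "cesaro K N M0 A' D' La Ld \<phi> n x \<le> exp (C / 2) * cesaro K N M0 A' D' La Ld \<phi> n x'"
    for n
    by simp
  then have "h x \<le> exp (C / 2) * h x'"
    using LIMSEQ_le[OF tendsto_uniform_limitI[OF lim x] tendsto_mult_left[OF tendsto_uniform_limitI[OF lim x']]]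
    by blast
  then show ?thesis using Hm_eq_uniform_limit[OF lim] x x' by simp
qed

lemma ratio_bounds_of_mutual_le:
  fixes a b c :: real
  assumes "0 < b" "a \<le> exp c * b" "b \<le> exp c * a"
  shows "exp (- c) \<le> a / b \<and> a / b \<le> exp c"
proof
  have "exp (- c) * b \<le> exp (- c) * (exp c * a)" using assms(3) by simp
  then show "exp (- c) \<le> a / b" using assms(1) by (simp add: le_divide_eq mult_exp_exp flip: mult.assoc)
  show "a / b \<le> exp c" using assms(1,2) by (simp add: divide_le_eq)
qed

theorem lemma2:
  fixes K N :: nat and A D M0 A' D' :: "nat \<Rightarrow> nat \<Rightarrow> bool"
    and \<phi> :: "seq \<Rightarrow> real" and C\<phi> P :: real and nseq nseq' :: "nat \<Rightarrow> nat"
    and m :: nat and x x' :: seq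
  assumes A_irr: "irreducible_mat K A" and D_irr: "irreducible_mat N D"
    and M0_A: "\<forall>i<K. \<forall>j<K. M0 i j = A i j"
    and M0_D: "\<forall>i<N. \<forall>j<N. M0 (K + i) (K + j) = D i j"
    and M0_prim: "some_power_positive (K + N) M0"
    and lip: "\<forall>y\<in>SFT (K + N) M0. \<forall>z\<in>SFT (K + N) M0. \<bar>\<phi> y - \<phi> z\<bar> \<le> C\<phi> * dist_sym y z"
    and PA: "pressure (Sigma_A K N M0) \<phi> = P" and PD: "pressure (Sigma_D K N M0) \<phi> = P"
    and A'_le: "\<forall>i<K. \<forall>j<K. A' i j \<longrightarrow> A i j" and A'_ne: "\<exists>i<K. \<exists>j<K. A' i j \<noteq> A i j"
    and D'_le: "\<forall>i<N. \<forall>j<N. D' i j \<longrightarrow> D i j" and D'_ne: "\<exists>i<N. \<exists>j<N. D' i j \<noteq> D i j"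
    and A'_rows: "\<forall>k<K. (\<exists>i<N. M0 (K + i) k) \<longrightarrow> (\<exists>j<K. A' k j)"
    and D'_rows: "\<forall>l<N. (\<exists>k<K. M0 k (K + l)) \<longrightarrow> (\<exists>j<N. D' l j)"
    and n_mono: "strict_mono nseq" and n'_mono: "strict_mono nseq'"
    and H_lim: "\<exists>h. uniform_limit (green K N M0)
                   (\<lambda>n. cesaro K N M0 A' D' (nseq m) (nseq' m) \<phi> n) h sequentially
                 \<and> (\<forall>y\<in>green K N M0. 0 < h y)"
    and x: "x \<in> green K N M0" and x': "x' \<in> green K N M0"
    and same: "x' 0 = x 0" "x' 1 = x 1"
  shows "exp (- C\<phi> / 2) \<le> Hm K N M0 A' D' (nseq m) (nseq' m) \<phi> x / Hm K N M0 A' D' (nseq m) (nseq' m) \<phi> x'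
       \<and> Hm K N M0 A' D' (nseq m) (nseq' m) \<phi> x / Hm K N M0 A' D' (nseq m) (nseq' m) \<phi> x' \<le> exp (C\<phi> / 2)"
proof -
  obtain h where lim: "uniform_limit (green K N M0) (\<lambda>n. cesaro K N M0 A' D' (nseq m) (nseq' m) \<phi> n) h sequentially"
    and h_pos: "\<forall>y\<in>green K N M0. 0 < h y"
    using H_lim by blast
  have xS: "x \<in> SFT (K + N) M0" and "x 0 \<noteq> x 1" using x by (auto simp: green_def)
  then have "x \<noteq> shift_pow 1 x" by (metis shift_pow_def add_0)
  then have C: "0 \<le> C\<phi>" using lipschitz_const_nonneg[OF lip xS shift_pow_SFT[OF xS]] by blast
  have "0 < Hm K N M0 A' D' (nseq m) (nseq' m) \<phi> x'"
    using Hm_eq_uniform_limit[OF lim x'] h_pos x' by simp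
  moreover note Hm_le_of_same_cylinder[OF lip C lim x x'] Hm_le_of_same_cylinder[OF lip C lim x' x] same
  ultimately show ?thesis using ratio_bounds_of_mutual_le[of _ _ "C\<phi> / 2"] by simp
qed

end
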